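(* In the setting described in the context, let $\Xi > 0$ be a constant with the following property (P): whenever $1 \leq k \leq q$, $x \in \Omega$ with $-2\Xi^{-1} \leq u_k(x) \leq 0$, and $a_0,\dots,a_{k-1} \geq 0$ with $a_i = 0$ for all $i$ with $u_i(x) \leq -2\Xi^{-1}$, one has $\sum_{i=0}^{k-1} a_i \leq \Xi |(\sum_{i=0}^{k-1} a_i N_i) \wedge N_k|$. Then for every $\gamma \in (0,\frac12)$ there exists $\bar\lambda$ such that for all $\lambda_0 \geq \bar\lambda$ the following holds: if $0 \leq j < k \leq q$ and $x \in \Omega$ satisfies $-\Xi^{-1} \leq \hat u_j(x) \leq 0$ and $-\Xi^{-1} \leq u_k(x) \leq 0$, then $|d\hat u_j \wedge du_k| \geq \Xi^{-1}$ at $x$.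
   Context: $n\ge3$; $u_0,\dots,u_q$ are non-constant linear (affine) functions on $\mathbb{R}^n$ and $\Omega=\bigcap_{m=0}^q\{u_m\le 0\}$ is a compact convex polytope with non-empty interior, such that: (a) for each $k$, $\{u_k>0\}\cap\bigcap_{m\neq k}\{u_m\le0\}\neq\emptyset$; (b) the Euclidean gradient of each $u_k$ is a unit vector $N_k$; (c) for $j<k$, if some $x\in\Omega$ has $u_j(x)=u_k(x)=0$ then $\langle N_j,N_k\rangle\le0$. Fix a smooth even $\eta:\mathbb{R}\to\mathbb{R}$ with $\eta(t)=|t|$ for $|t|\ge\frac12$ and $\eta''\ge0$. For $\gamma\in(0,\frac12)$, $\lambda_0>1$ put $\lambda_k=\gamma^{-k}\lambda_0$, $\hat u_0=u_0$, $\hat u_k=\frac12\big(\hat u_{k-1}+u_k+\lambda_k^{-1}\eta(\lambda_k(\hat u_{k-1}-u_k))\big)$ for $1\le k\le q$. For 1-forms/vectors, $|v\wedge w|$ denotes the Euclidean norm of the wedge product, $|v\wedge w|^2=|v|^2|w|^2-\langle v,w\rangle^2$. *)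

theory Defs
  imports "HOL-Analysis.Analysis"
begin

definition aff :: "'a::euclidean_space \<Rightarrow> real \<Rightarrow> 'a \<Rightarrow> real" where
  "aff N c x = N \<bullet> x + c"

definition wedge_norm :: "'a::euclidean_space \<Rightarrow> 'a \<Rightarrow> real" where
  "wedge_norm v w = sqrt ((norm v)\<^sup>2 * (norm w)\<^sup>2 - (v \<bullet> w)\<^sup>2)"

definition smooth_fun :: "(real \<Rightarrow> real) \<Rightarrow> bool" where
  "smooth_fun f \<longleftrightarrow> (\<exists>D. D 0 = f \<and> (\<forall>n t. (D n has_real_derivative D (Suc n) t) (at t)))"

fun hatu :: "(real \<Rightarrow> real) \<Rightarrow> (nat \<Rightarrow> 'a \<Rightarrow> real) \<Rightarrow> real \<Rightarrow> real \<Rightarrow> nat \<Rightarrow> 'a \<Rightarrow> real" where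
  "hatu \<eta> u \<gamma> lam0 0 x = u 0 x"
| "hatu \<eta> u \<gamma> lam0 (Suc k) x =
     (let l = lam0 / \<gamma> ^ Suc k; a = hatu \<eta> u \<gamma> lam0 k x; b = u (Suc k) x
      in (a + b + \<eta> (l * (a - b)) / l) / 2)"

end

theory Submission
  imports Defs
begin

text \<open>Each step of the recursion is a smoothed maximum
  \<open>(a + b + \<eta>(\<lambda>(a - b))/\<lambda>)/2\<close>, whose gradient weights the gradients of
  \<open>a\<close> and \<open>b\<close> by \<open>(1 \<pm> \<eta>'(\<lambda>(a - b)))/2 \<in> [0,1]\<close>, and which exceeds either argument
  that carries positive weight by at most \<open>1/\<lambda>\<close>. By induction, \<open>d\<hat>u\<^sub>j(x)\<close> is a convex
  combination \<open>\<Sum> a\<^sub>i N\<^sub>i\<close> over \<open>i \<le> j\<close> in which every active index satisfies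
  \<open>u\<^sub>i(x) \<ge> \<hat>u\<^sub>j(x) - j/\<lambda>\<^sub>0\<close>. For \<open>\<lambda>\<^sub>0 \<ge> q\<Xi>\<close> this forces \<open>u\<^sub>i(x) > -2/\<Xi>\<close> on
  every active index, so property (P) applies to the weights and gives
  \<open>1 = \<Sum> a\<^sub>i \<le> \<Xi> |d\<hat>u\<^sub>j \<and> N\<^sub>k|\<close>.\<close>

lemma convex_weights_extend:
  fixes a :: "nat \<Rightarrow> real" and N :: "nat \<Rightarrow> 'a::real_vector"
  assumes "\<forall>i. 0 \<le> a i" and "(\<Sum>i\<le>k. a i) = 1" and "\<bar>s\<bar> \<le> 1"
    and a'_def: "a' = (\<lambda>i. if i \<le> k then (1 + s) / 2 * a i else if i = Suc k then (1 - s) / 2 else 0)"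
  shows "\<forall>i. 0 \<le> a' i" and "\<forall>i>Suc k. a' i = 0" and "(\<Sum>i\<le>Suc k. a' i) = 1"
    and "(\<Sum>i\<le>Suc k. a' i *\<^sub>R N i) = ((1 + s) / 2) *\<^sub>R (\<Sum>i\<le>k. a i *\<^sub>R N i) + ((1 - s) / 2) *\<^sub>R N (Suc k)"
proof -
  show "\<forall>i. 0 \<le> a' i"
    using assms(1,3) by (simp add: a'_def)
  show "\<forall>i>Suc k. a' i = 0"
    by (simp add: a'_def)
  have "(\<Sum>i\<le>Suc k. a' i) = (1 + s) / 2 * (\<Sum>i\<le>k. a i) + (1 - s) / 2"
    by (simp add: a'_def sum_distrib_left)
  then show "(\<Sum>i\<le>Suc k. a' i) = 1"
    using assms(2) by (simp add: field_simps)
  show "(\<Sum>i\<le>Suc k. a' i *\<^sub>R N i) = ((1 + s) / 2) *\<^sub>R (\<Sum>i\<le>k. a i *\<^sub>R N i) + ((1 - s) / 2) *\<^sub>R N (Suc k)"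
    by (simp add: a'_def scaleR_sum_right)
qed

locale abs_smoothing =
  fixes \<eta> \<eta>' :: "real \<Rightarrow> real"
  assumes has_real_deriv: "(\<eta> has_real_derivative \<eta>' t) (at t)"
    and deriv_mono: "s \<le> t \<Longrightarrow> \<eta>' s \<le> \<eta>' t"
    and eq_abs: "1/2 \<le> \<bar>t\<bar> \<Longrightarrow> \<eta> t = \<bar>t\<bar>"

lemma abs_smoothing_deriv:
  assumes "smooth_fun \<eta>" and "\<And>t. 0 \<le> deriv (deriv \<eta>) t"
    and "\<And>t. 1/2 \<le> \<bar>t\<bar> \<Longrightarrow> \<eta> t = \<bar>t\<bar>"
  shows "abs_smoothing \<eta> (deriv \<eta>)"
proof
  obtain D where D0: "D 0 = \<eta>" and D: "\<And>n t. (D n has_real_derivative D (Suc n) t) (at t)"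
    using assms(1) unfolding smooth_fun_def by blast
  have deriv_eq: "deriv (D n) = D (Suc n)" for n
    using D by (intro ext DERIV_imp_deriv)
  show "(\<eta> has_real_derivative deriv \<eta> t) (at t)" for t
    using D[of 0 t] deriv_eq[of 0] D0 by simp
  show "deriv \<eta> s \<le> deriv \<eta> t" if "s \<le> t" for s t
    using DERIV_nonneg_imp_nondecreasing[OF that, of "D 1"] D[of 1] assms(2) deriv_eq D0
    by (metis One_nat_def)
  show "1/2 \<le> \<bar>t\<bar> \<Longrightarrow> \<eta> t = \<bar>t\<bar>" for t
    by (fact assms(3))
qed

context abs_smoothing
begin

lemma deriv_eq_1:
  assumes "1/2 < t" shows "\<eta>' t = 1"
proof -
  have "((\<lambda>s. \<eta> s - s) has_real_derivative \<eta>' t - 1) (at t)"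
    by (auto intro!: derivative_eq_intros has_real_deriv)
  moreover have "\<forall>s. \<bar>t - s\<bar> < t - 1/2 \<longrightarrow> \<eta> t - t = \<eta> s - s"
    using assms eq_abs by auto
  ultimately have "\<eta>' t - 1 = 0"
    using assms by (intro DERIV_local_const) auto
  then show ?thesis by simp
qed

lemma deriv_eq_minus_1:
  assumes "t < -1/2" shows "\<eta>' t = -1"
proof -
  have "((\<lambda>s. \<eta> s + s) has_real_derivative \<eta>' t + 1) (at t)"
    by (auto intro!: derivative_eq_intros has_real_deriv)
  moreover have "\<forall>s. \<bar>t - s\<bar> < -1/2 - t \<longrightarrow> \<eta> t + t = \<eta> s + s"
    using assms eq_abs by auto
  ultimately have "\<eta>' t + 1 = 0"
    using assms by (intro DERIV_local_const) auto
  then show ?thesis by simp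
qed

lemma deriv_bounds: "-1 \<le> \<eta>' t" "\<eta>' t \<le> 1"
  using deriv_mono[of "min t (-1)" t] deriv_eq_minus_1[of "min t (-1)"]
    deriv_mono[of t "max t 1"] deriv_eq_1[of "max t 1"] by auto

lemma le_abs_add_1: "\<eta> t \<le> \<bar>t\<bar> + 1"
proof (cases "1/2 \<le> \<bar>t\<bar>")
  case True
  then show ?thesis using eq_abs by simp
next
  case False
  then have "t < 1/2" by simp
  then obtain z where "\<eta> (1/2) - \<eta> t = (1/2 - t) * \<eta>' z"
    using MVT2[of t "1/2" \<eta> \<eta>'] has_real_deriv by blast
  moreover have "- (1/2 - t) \<le> (1/2 - t) * \<eta>' z"
    using mult_left_mono[OF deriv_bounds(1)[of z], of "1/2 - t"] \<open>t < 1/2\<close> by simp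
  ultimately show ?thesis using eq_abs[of "1/2"] by simp
qed

definition smooth_max :: "real \<Rightarrow> real \<Rightarrow> real \<Rightarrow> real" where
  "smooth_max l a b = (a + b + \<eta> (l * (a - b)) / l) / 2"

lemma smooth_max_le_max:
  assumes "0 < l" shows "smooth_max l a b \<le> max a b + 1 / (2 * l)"
proof -
  have "\<eta> (l * (a - b)) / l \<le> (l * \<bar>a - b\<bar> + 1) / l"
    using le_abs_add_1[of "l * (a - b)"] assms by (intro divide_right_mono) (auto simp: abs_mult)
  also have "\<dots> = 2 * max a b - (a + b) + 1 / l"
    using assms by (simp add: add_divide_distrib max_def abs_if)
  finally show ?thesis
    by (simp add: smooth_max_def)
qed

lemma smooth_max_le_left:
  assumes "0 < l" and "-1 < \<eta>' (l * (a - b))"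
  shows "smooth_max l a b \<le> a + 1 / l"
proof -
  have "-1/2 \<le> l * (a - b)" using assms(2) deriv_eq_minus_1 by (metis less_irrefl not_le)
  then have "b \<le> a + 1 / (2 * l)" using assms(1) by (simp add: field_simps)
  then have "max a b \<le> a + 1 / (2 * l)" using assms(1) by simp
  moreover have "1 / (2 * l) + 1 / (2 * l) = 1 / l" by simp
  ultimately show ?thesis using smooth_max_le_max[OF assms(1), of a b] by linarith
qed

lemma smooth_max_le_right:
  assumes "0 < l" and "\<eta>' (l * (a - b)) < 1"
  shows "smooth_max l a b \<le> b + 1 / l"
proof -
  have "l * (a - b) \<le> 1/2" using assms(2) deriv_eq_1 by (metis less_irrefl not_le)
  then have "a \<le> b + 1 / (2 * l)" using assms(1) by (simp add: field_simps)
  then have "max a b \<le> b + 1 / (2 * l)" using assms(1) by simp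
  moreover have "1 / (2 * l) + 1 / (2 * l) = 1 / l" by simp
  ultimately show ?thesis using smooth_max_le_max[OF assms(1), of a b] by linarith
qed

lemma GDERIV_smooth_max:
  assumes "l \<noteq> 0" and "GDERIV f x :> F" and "GDERIV g x :> G"
  defines "s \<equiv> \<eta>' (l * (f x - g x))"
  shows "GDERIV (\<lambda>y. smooth_max l (f y) (g y)) x :> ((1 + s) / 2) *\<^sub>R F + ((1 - s) / 2) *\<^sub>R G"
proof -
  have "DERIV (\<lambda>t. \<eta> (l * t) / l) (f x - g x) :> s"
    using assms(1) unfolding s_def
    by (auto intro!: derivative_eq_intros DERIV_chain2[OF has_real_deriv])
  then have "GDERIV (\<lambda>y. \<eta> (l * (f y - g y)) / l) x :> s *\<^sub>R (F - G)"
    by (rule GDERIV_DERIV_compose[where g = "\<lambda>t. \<eta> (l * t) / l", OF GDERIV_diff[OF assms(2,3)]])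
  from GDERIV_mult[OF GDERIV_add[OF GDERIV_add[OF assms(2,3)] this] GDERIV_const[of "1/2"]]
  have "GDERIV (\<lambda>y. (f y + g y + \<eta> (l * (f y - g y)) / l) * (1/2)) x
          :> (1/2) *\<^sub>R (F + G + s *\<^sub>R (F - G))"
    by simp
  moreover have "(1/2) *\<^sub>R (F + G + s *\<^sub>R (F - G)) = ((1 + s) / 2) *\<^sub>R F + ((1 - s) / 2) *\<^sub>R G"
    by (simp add: algebra_simps add_divide_distrib diff_divide_distrib)
  ultimately show ?thesis
    unfolding smooth_max_def by simp
qed

lemma hatu_Suc_eq_smooth_max:
  "hatu \<eta> u \<gamma> lam0 (Suc k) x = smooth_max (lam0 / \<gamma> ^ Suc k) (hatu \<eta> u \<gamma> lam0 k x) (u (Suc k) x)"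
  by (simp add: smooth_max_def Let_def)

lemma hatu_gradient_convex_combination:
  fixes u :: "nat \<Rightarrow> 'a::real_inner \<Rightarrow> real"
  assumes grad: "\<And>m. GDERIV (u m) x :> N m"
    and \<gamma>: "0 < \<gamma>" "\<gamma> \<le> 1" and lam0: "0 < lam0"
  shows "\<exists>a. (\<forall>i. 0 \<le> a i) \<and> (\<forall>i>k. a i = 0) \<and> (\<Sum>i\<le>k. a i) = 1 \<and>
    GDERIV (hatu \<eta> u \<gamma> lam0 k) x :> (\<Sum>i\<le>k. a i *\<^sub>R N i) \<and>
    (\<forall>i\<le>k. 0 < a i \<longrightarrow> hatu \<eta> u \<gamma> lam0 k x - k / lam0 \<le> u i x)"
proof (induction k)
  case 0
  show ?case
    using grad[of 0] by (intro exI[of _ "\<lambda>i. if i = 0 then 1 else 0"]) auto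
next
  case (Suc k)
  let ?H = "hatu \<eta> u \<gamma> lam0"
  from Suc.IH obtain a where a_nonneg: "\<forall>i. 0 \<le> a i" and a_sum: "(\<Sum>i\<le>k. a i) = 1"
    and a_grad: "GDERIV (?H k) x :> (\<Sum>i\<le>k. a i *\<^sub>R N i)"
    and a_active: "\<forall>i\<le>k. 0 < a i \<longrightarrow> ?H k x - k / lam0 \<le> u i x"
    by blast
  define l where "l = lam0 / \<gamma> ^ Suc k"
  define s where "s = \<eta>' (l * (?H k x - u (Suc k) x))"
  define a' where "a' = (\<lambda>i. if i \<le> k then (1 + s) / 2 * a i else if i = Suc k then (1 - s) / 2 else 0)"
  have "lam0 \<le> l"
    using \<gamma> lam0 power_le_one[of \<gamma> "Suc k"] by (simp add: l_def le_divide_eq mult_le_cancel_left1)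
  then have l: "0 < l" "1 / l \<le> 1 / lam0"
    using lam0 by (auto intro: divide_left_mono)
  have H_Suc: "?H (Suc k) = (\<lambda>y. smooth_max l (?H k y) (u (Suc k) y))"
    by (intro ext) (simp only: hatu_Suc_eq_smooth_max l_def)
  have "\<bar>s\<bar> \<le> 1"
    using deriv_bounds by (simp add: s_def abs_le_iff)
  note a' = convex_weights_extend[OF a_nonneg a_sum this a'_def]
  have grad': "GDERIV (?H (Suc k)) x :> (\<Sum>i\<le>Suc k. a' i *\<^sub>R N i)"
    unfolding H_Suc a'(4)[of N] s_def using GDERIV_smooth_max[OF _ a_grad grad] l(1) by simp
  have Suc_div: "real (Suc k) / lam0 = k / lam0 + 1 / lam0"
    by (simp add: add_divide_distrib)
  have active': "?H (Suc k) x - Suc k / lam0 \<le> u i x" if "i \<le> Suc k" "0 < a' i" for i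
  proof (cases "i = Suc k")
    case True
    with that have "s < 1" by (simp add: a'_def)
    then have "?H (Suc k) x \<le> u (Suc k) x + 1 / l"
      unfolding H_Suc s_def using smooth_max_le_right l(1) by simp
    moreover have "0 \<le> real k / lam0"
      using lam0 by simp
    ultimately show ?thesis
      unfolding True using l(2) Suc_div by linarith
  next
    case False
    with that have "i \<le> k" "-1 < s" "0 < a i"
      using a_nonneg[rule_format, of i] by (auto simp: a'_def zero_less_mult_iff)
    then have "?H (Suc k) x \<le> ?H k x + 1 / l" "?H k x - k / lam0 \<le> u i x"
      unfolding H_Suc s_def using smooth_max_le_left l(1) a_active by auto
    then show ?thesis using l(2) Suc_div by linarith
  qed
  show ?case
    using a'(1-3) grad' active' by blast
qed

lemma wedge_norm_gradient_hatu_ge: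
  fixes u :: "nat \<Rightarrow> 'a::euclidean_space \<Rightarrow> real"
  assumes grad: "\<And>m. GDERIV (u m) x :> N m"
    and \<gamma>: "0 < \<gamma>" "\<gamma> \<le> 1" and \<Xi>: "0 < \<Xi>" and lam0: "real q * \<Xi> \<le> lam0"
    and jk: "j < k" "k \<le> q"
    and transversal: "\<And>a. \<forall>i<k. 0 \<le> a i \<Longrightarrow> \<forall>i<k. u i x \<le> - 2 / \<Xi> \<longrightarrow> a i = 0 \<Longrightarrow>
        (\<Sum>i<k. a i) \<le> \<Xi> * wedge_norm (\<Sum>i<k. a i *\<^sub>R N i) (N k)"
    and hatu_ge: "- 1 / \<Xi> \<le> hatu \<eta> u \<gamma> lam0 j x"
  shows "\<exists>g. GDERIV (hatu \<eta> u \<gamma> lam0 j) x :> g \<and> 1 / \<Xi> \<le> wedge_norm g (N k)"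
proof -
  have "real j * \<Xi> < real q * \<Xi>"
    using jk \<Xi> by simp
  then have "real j * \<Xi> < lam0"
    using lam0 by linarith
  moreover have "0 \<le> real j * \<Xi>"
    using \<Xi> by simp
  ultimately have lam0_pos: "0 < lam0"
    by linarith
  have j_small: "j / lam0 < 1 / \<Xi>"
    using \<open>real j * \<Xi> < lam0\<close> lam0_pos \<Xi> by (simp add: field_simps)
  obtain a where a_nonneg: "\<forall>i. 0 \<le> a i" and a_supp: "\<forall>i>j. a i = 0" and a_sum: "(\<Sum>i\<le>j. a i) = 1"
    and a_grad: "GDERIV (hatu \<eta> u \<gamma> lam0 j) x :> (\<Sum>i\<le>j. a i *\<^sub>R N i)"
    and a_active: "\<forall>i\<le>j. 0 < a i \<longrightarrow> hatu \<eta> u \<gamma> lam0 j x - j / lam0 \<le> u i x"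
    using hatu_gradient_convex_combination[where u = u and N = N and k = j, OF grad \<gamma> lam0_pos]
    by blast
  have inactive: "a i = 0" if "u i x \<le> - 2 / \<Xi>" for i
  proof (rule ccontr)
    assume "a i \<noteq> 0"
    then have "i \<le> j" "0 < a i"
      using a_supp a_nonneg[rule_format, of i] by (auto simp: not_less[symmetric])
    then have "hatu \<eta> u \<gamma> lam0 j x - j / lam0 \<le> u i x"
      using a_active by blast
    then have "- 1 / \<Xi> - 1 / \<Xi> < u i x"
      using hatu_ge j_small by linarith
    then show False using that by simp
  qed
  have subset: "{..j} \<subseteq> {..<k}" using jk by auto
  have "(\<Sum>i<k. a i) = 1"
    unfolding a_sum[symmetric] by (rule sum.mono_neutral_right[OF _ subset]) (use a_supp in auto)
  moreover have "(\<Sum>i<k. a i *\<^sub>R N i) = (\<Sum>i\<le>j. a i *\<^sub>R N i)"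
    by (rule sum.mono_neutral_right[OF _ subset]) (use a_supp in auto)
  ultimately have "1 \<le> \<Xi> * wedge_norm (\<Sum>i\<le>j. a i *\<^sub>R N i) (N k)"
    using transversal[of a] a_nonneg inactive by simp
  then show ?thesis
    using a_grad \<Xi> by (auto simp: field_simps)
qed

end

lemma GDERIV_aff: "GDERIV (aff N c) x :> N"
  unfolding aff_def[abs_def] gderiv_def
  by (auto intro!: derivative_eq_intros simp: inner_commute)

theorem lemma2p11:
  fixes N :: "nat \<Rightarrow> 'a::euclidean_space" and c :: "nat \<Rightarrow> real"
    and q :: nat and \<eta> :: "real \<Rightarrow> real" and \<Xi> :: real and \<Omega> :: "'a set"
  assumes dim: "DIM('a) \<ge> 3"
    and unit: "\<And>m. m \<le> q \<Longrightarrow> norm (N m) = 1"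
    and Omega_def: "\<Omega> = {x. \<forall>m\<le>q. aff (N m) (c m) x \<le> 0}"
    and compact: "compact \<Omega>" and nonempty_int: "interior \<Omega> \<noteq> {}"
    and cond_a: "\<And>k. k \<le> q \<Longrightarrow>
        \<exists>x. aff (N k) (c k) x > 0 \<and> (\<forall>m\<le>q. m \<noteq> k \<longrightarrow> aff (N m) (c m) x \<le> 0)"
    and cond_c: "\<And>j k. j < k \<Longrightarrow> k \<le> q \<Longrightarrow>
        (\<exists>x\<in>\<Omega>. aff (N j) (c j) x = 0 \<and> aff (N k) (c k) x = 0) \<Longrightarrow> N j \<bullet> N k \<le> 0"
    and eta_smooth: "smooth_fun \<eta>"
    and eta_even: "\<And>t. \<eta> (- t) = \<eta> t"
    and eta_abs: "\<And>t. \<bar>t\<bar> \<ge> 1/2 \<Longrightarrow> \<eta> t = \<bar>t\<bar>"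
    and eta_convex: "\<And>t. deriv (deriv \<eta>) t \<ge> 0"
    and Xi_pos: "\<Xi> > 0"
    and P: "\<And>k x a. 1 \<le> k \<Longrightarrow> k \<le> q \<Longrightarrow> x \<in> \<Omega> \<Longrightarrow>
        - 2 / \<Xi> \<le> aff (N k) (c k) x \<Longrightarrow> aff (N k) (c k) x \<le> 0 \<Longrightarrow>
        (\<forall>i<k. a i \<ge> 0) \<Longrightarrow> (\<forall>i<k. aff (N i) (c i) x \<le> - 2 / \<Xi> \<longrightarrow> a i = 0) \<Longrightarrow>
        (\<Sum>i<k. a i) \<le> \<Xi> * wedge_norm (\<Sum>i<k. a i *\<^sub>R N i) (N k)"
  shows "\<forall>\<gamma>. 0 < \<gamma> \<and> \<gamma> < 1/2 \<longrightarrow>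
    (\<exists>lambar. \<forall>lam0. lam0 > 1 \<and> lam0 \<ge> lambar \<longrightarrow>
      (\<forall>j k x. j < k \<and> k \<le> q \<and> x \<in> \<Omega> \<and>
          - 1 / \<Xi> \<le> hatu \<eta> (\<lambda>m. aff (N m) (c m)) \<gamma> lam0 j x \<and>
          hatu \<eta> (\<lambda>m. aff (N m) (c m)) \<gamma> lam0 j x \<le> 0 \<and>
          - 1 / \<Xi> \<le> aff (N k) (c k) x \<and> aff (N k) (c k) x \<le> 0 \<longrightarrow>
        (\<exists>g. (GDERIV (hatu \<eta> (\<lambda>m. aff (N m) (c m)) \<gamma> lam0 j) x :> g) \<and>
             wedge_norm g (N k) \<ge> 1 / \<Xi>)))"
proof (intro allI impI exI[of _ "real q * \<Xi>"], elim conjE)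
  fix \<gamma> lam0 :: real and j k :: nat and x :: 'a
  let ?u = "\<lambda>m. aff (N m) (c m)"
  interpret abs_smoothing \<eta> "deriv \<eta>"
    by (rule abs_smoothing_deriv[OF eta_smooth eta_convex eta_abs])
  assume "0 < \<gamma>" "\<gamma> < 1/2" "1 < lam0" "real q * \<Xi> \<le> lam0" "j < k" "k \<le> q" "x \<in> \<Omega>"
    "- 1 / \<Xi> \<le> hatu \<eta> ?u \<gamma> lam0 j x" "hatu \<eta> ?u \<gamma> lam0 j x \<le> 0"
    "- 1 / \<Xi> \<le> ?u k x" "?u k x \<le> 0"
  moreover have "- 2 / \<Xi> \<le> - 1 / \<Xi>"
    using Xi_pos by (simp add: divide_right_mono)
  ultimately show "\<exists>g. (GDERIV (hatu \<eta> ?u \<gamma> lam0 j) x :> g) \<and> 1 / \<Xi> \<le> wedge_norm g (N k)"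
    using Xi_pos P[of k x] by (intro wedge_norm_gradient_hatu_ge[where q = q] GDERIV_aff) auto
qed

end
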